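(* Let $G$ be an abelian group and $K=G\oplus G$. Then every uniformly fully inert subgroup of $K$ is commensurable with some fully invariant subgroup of $K$.
   Context: All groups are additively written abelian groups. A subgroup $F$ of $K$ is fully invariant if $\phi(F)\subseteq F$ for every endomorphism $\phi$ of $K$. A subgroup $S$ of $K$ is uniformly fully inert if there is a fixed positive integer $m$ such that $(\phi(S)+S)/S$ has at most $m$ elements for every endomorphism $\phi$ of $K$. Subgroups $B,C$ are commensurable if both $(B+C)/B$ and $(B+C)/C$ are finite. *)

theory Defs
  imports Main "HOL-Library.Product_Plus"
begin

(* Abelian groups are modelled as types of class ab_group_add; the whole type is the group. *)

definition endo :: "('k::ab_group_add \<Rightarrow> 'k) \<Rightarrow> bool" where
  "endo \<phi> \<longleftrightarrow> (\<forall>x y. \<phi> (x + y) = \<phi> x + \<phi> y)"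

definition is_subgroup :: "'k::ab_group_add set \<Rightarrow> bool" where
  "is_subgroup S \<longleftrightarrow> 0 \<in> S \<and> (\<forall>x\<in>S. \<forall>y\<in>S. x + y \<in> S) \<and> (\<forall>x\<in>S. - x \<in> S)"

definition sumset :: "'k::ab_group_add set \<Rightarrow> 'k set \<Rightarrow> 'k set" where
  "sumset A B = {a + b | a b. a \<in> A \<and> b \<in> B}"

(* the set of cosets x + B for x \<in> A, i.e. A/B when B \<subseteq> A *)
definition quot :: "'k::ab_group_add set \<Rightarrow> 'k set \<Rightarrow> 'k set set" where
  "quot A B = (\<lambda>x. (\<lambda>b. x + b) ` B) ` A"

definition fully_invariant :: "'k::ab_group_add set \<Rightarrow> bool" where
  "fully_invariant F \<longleftrightarrow> is_subgroup F \<and> (\<forall>\<phi>. endo \<phi> \<longrightarrow> \<phi> ` F \<subseteq> F)"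

definition uniformly_fully_inert :: "'k::ab_group_add set \<Rightarrow> bool" where
  "uniformly_fully_inert S \<longleftrightarrow> is_subgroup S \<and>
     (\<exists>m::nat. m > 0 \<and> (\<forall>\<phi>. endo \<phi> \<longrightarrow>
        finite (quot (sumset (\<phi> ` S) S) S) \<and> card (quot (sumset (\<phi> ` S) S) S) \<le> m))"

definition commensurable :: "'k::ab_group_add set \<Rightarrow> 'k set \<Rightarrow> bool" where
  "commensurable B C \<longleftrightarrow> finite (quot (sumset B C) B) \<and> finite (quot (sumset B C) C)"

end

theory Submission
  imports Defs HOL.Modules "HOL-Library.Function_Algebras"
begin

text \<open>
  Let \<open>R\<close> be the endomorphism ring of \<open>K\<close> and \<open>S\<close> uniformly fully inert with bound \<open>m\<close>.
  The elements \<open>y\<close> whose orbit \<open>R y\<close> is finite modulo \<open>S\<close>, i.e. whose colon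
  \<open>(S : y) = {\<phi>. \<phi> y \<in> S}\<close> has finite index in \<open>R\<close>, form a subgroup; its intersection \<open>L\<close>
  with \<open>S\<close> has finite index in \<open>S\<close>, for otherwise B. H. Neumann's lemma on coverings by cosets
  yields an endomorphism separating \<open>m + 1\<close> elements of \<open>S\<close> modulo \<open>S\<close>. Next, a chain
  \<open>y\<^sub>1, \<dots>, y\<^sub>t\<close> in \<open>L\<close> with \<open>R y\<^sub>i \<not>\<subseteq> S + R y\<^sub>1 + \<dots> + R y\<^bsub>i-1\<^esub>\<close> has
  length at most \<open>2 m\<close>, by averaging over the cosets of \<open>(S : y\<^sub>1) \<inter> \<dots> \<inter> (S : y\<^sub>t)\<close>
  in \<open>R\<close>. For a maximal chain, \<open>T = S + R y\<^sub>1 + \<dots> + R y\<^sub>t\<close> is finite modulo \<open>S\<close> and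
  contains the fully invariant subgroup \<open>N = R L\<close>, while \<open>L \<subseteq> N\<close> has finite index in \<open>S\<close>;
  hence \<open>S\<close> and \<open>N\<close> are commensurable. The argument works in every abelian group.
\<close>

section \<open>Cosets and finite index\<close>

abbreviation coset :: "'k::ab_group_add \<Rightarrow> 'k set \<Rightarrow> 'k set" where
  "coset x H \<equiv> (\<lambda>b. x + b) ` H"

lemma subgroup_zero: "is_subgroup H \<Longrightarrow> 0 \<in> H"
  and subgroup_add: "is_subgroup H \<Longrightarrow> x \<in> H \<Longrightarrow> y \<in> H \<Longrightarrow> x + y \<in> H"
  and subgroup_uminus: "is_subgroup H \<Longrightarrow> x \<in> H \<Longrightarrow> - x \<in> H"
  by (simp_all add: is_subgroup_def)

lemma subgroup_diff: "is_subgroup H \<Longrightarrow> x \<in> H \<Longrightarrow> y \<in> H \<Longrightarrow> x - y \<in> H"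
  using subgroup_add[of H x "- y"] subgroup_uminus[of H y] by simp

lemma subgroup_Int: "is_subgroup A \<Longrightarrow> is_subgroup B \<Longrightarrow> is_subgroup (A \<inter> B)"
  by (simp add: is_subgroup_def)

lemma subgroup_sumset:
  assumes A: "is_subgroup A" and B: "is_subgroup B"
  shows "is_subgroup (sumset A B)"
  unfolding is_subgroup_def
proof (intro conjI ballI)
  show "0 \<in> sumset A B"
    unfolding sumset_def using subgroup_zero[OF A] subgroup_zero[OF B] by force
next
  fix x y assume "x \<in> sumset A B" "y \<in> sumset A B"
  then obtain a b a' b' where ab: "a \<in> A" "b \<in> B" "a' \<in> A" "b' \<in> B"
    and "x = a + b" "y = a' + b'"
    unfolding sumset_def by blast
  then have "x + y = (a + a') + (b + b')" by (simp add: algebra_simps)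
  then show "x + y \<in> sumset A B"
    unfolding sumset_def using subgroup_add[OF A ab(1,3)] subgroup_add[OF B ab(2,4)] by blast
next
  fix x assume "x \<in> sumset A B"
  then obtain a b where "a \<in> A" "b \<in> B" "- x = - a + - b" unfolding sumset_def by force
  then show "- x \<in> sumset A B"
    unfolding sumset_def using subgroup_uminus[OF A] subgroup_uminus[OF B] by blast
qed

lemma subset_sumset_right: "0 \<in> A \<Longrightarrow> B \<subseteq> sumset A B"
  unfolding sumset_def by force

lemma subset_sumset_left: "0 \<in> B \<Longrightarrow> A \<subseteq> sumset A B"
  unfolding sumset_def by force

lemma coset_subset:
  assumes "is_subgroup H" "x - y \<in> H"
  shows "coset x H \<subseteq> coset y H"
proof
  fix u assume "u \<in> coset x H"
  then obtain h where "h \<in> H" "u = y + ((x - y) + h)" by (auto simp: algebra_simps)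
  with assms show "u \<in> coset y H" using subgroup_add by blast
qed

lemma coset_eq_iff:
  assumes "is_subgroup H"
  shows "coset x H = coset y H \<longleftrightarrow> x - y \<in> H"
proof
  assume "coset x H = coset y H"
  moreover have "x \<in> coset x H" using subgroup_zero[OF assms] by force
  ultimately obtain h where "h \<in> H" "x = y + h" by auto
  then show "x - y \<in> H" by simp
next
  assume "x - y \<in> H"
  moreover have "y - x = - (x - y)" by simp
  ultimately show "coset x H = coset y H"
    using coset_subset[OF assms] subgroup_uminus[OF assms] by (metis subset_antisym)
qed

lemma coset_eq_if_mem:
  assumes "is_subgroup H" "z \<in> coset x H"
  shows "coset z H = coset x H"
  using assms by (auto simp: coset_eq_iff)

lemma finite_quot_iff:
  assumes "is_subgroup B"
  shows "finite (quot A B) \<longleftrightarrow> (\<exists>F. finite F \<and> A \<subseteq> sumset F B)"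
proof
  let ?r = "inv_into A (\<lambda>x. coset x B)"
  assume fin: "finite (quot A B)"
  have "A \<subseteq> sumset (?r ` quot A B) B"
  proof
    fix a assume a: "a \<in> A"
    then have C: "coset a B \<in> quot A B" unfolding quot_def by blast
    then have "coset (?r (coset a B)) B = coset a B"
      unfolding quot_def by (rule f_inv_into_f)
    then have "a - ?r (coset a B) \<in> B" using coset_eq_iff[OF assms] by blast
    moreover have "a = ?r (coset a B) + (a - ?r (coset a B))" by simp
    ultimately show "a \<in> sumset (?r ` quot A B) B"
      unfolding sumset_def using C by blast
  qed
  with fin show "\<exists>F. finite F \<and> A \<subseteq> sumset F B" by blast
next
  assume "\<exists>F. finite F \<and> A \<subseteq> sumset F B"
  then obtain F where F: "finite F" "A \<subseteq> sumset F B" by blast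
  have "quot A B \<subseteq> (\<lambda>f. coset f B) ` F"
  proof
    fix C assume "C \<in> quot A B"
    then obtain a where a: "a \<in> A" "C = coset a B" unfolding quot_def by auto
    with F(2) obtain f h where "f \<in> F" "h \<in> B" "a = f + h" unfolding sumset_def by blast
    with a assms have "C = coset f B" by (simp add: coset_eq_iff)
    with \<open>f \<in> F\<close> show "C \<in> (\<lambda>f. coset f B) ` F" by blast
  qed
  with F(1) show "finite (quot A B)" using finite_subset by blast
qed

lemma finite_quot_self:
  assumes "is_subgroup A"
  shows "finite (quot A A)"
proof -
  have "A \<subseteq> sumset {0} A" by (rule subset_sumset_right) simp
  moreover have "finite {0}" by simp
  ultimately show ?thesis unfolding finite_quot_iff[OF assms] by blast
qed

lemma finite_quot_mono:
  assumes "finite (quot E H)" "is_subgroup H" "is_subgroup H'" "H \<subseteq> H'"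
  shows "finite (quot E H')"
proof -
  obtain F where "finite F" "E \<subseteq> sumset F H"
    using assms(1,2) finite_quot_iff by blast
  moreover have "sumset F H \<subseteq> sumset F H'" using assms(4) unfolding sumset_def by blast
  ultimately show ?thesis using finite_quot_iff[OF assms(3)] by blast
qed

lemma finite_quot_Int:
  assumes "finite (quot E A)" "finite (quot E B)" "is_subgroup A" "is_subgroup B"
  shows "finite (quot E (A \<inter> B))"
proof -
  define g where "g x = (coset x A, coset x B)" for x
  have "g ` E \<subseteq> quot E A \<times> quot E B" unfolding g_def quot_def by auto
  then have "finite (g ` E)" using assms(1,2) finite_subset by blast
  moreover have "quot E (A \<inter> B) = (\<lambda>p. coset (inv_into E g p) (A \<inter> B)) ` g ` E"
  proof -
    have "coset (inv_into E g (g x)) (A \<inter> B) = coset x (A \<inter> B)" if "x \<in> E" for x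
    proof -
      have "g (inv_into E g (g x)) = g x" using that by (simp add: f_inv_into_f)
      then show ?thesis
        unfolding g_def using assms(3,4) subgroup_Int[OF assms(3,4)] by (simp add: coset_eq_iff)
    qed
    then show ?thesis unfolding quot_def image_image by (auto intro!: image_cong)
  qed
  ultimately show ?thesis by simp
qed

lemma infinite_quot_obtain_incongruent:
  assumes "infinite (quot A B)" "is_subgroup B"
  obtains X where "X \<subseteq> A" "finite X" "card X = n"
    "\<And>x y. x \<in> X \<Longrightarrow> y \<in> X \<Longrightarrow> x \<noteq> y \<Longrightarrow> x - y \<notin> B"
proof -
  obtain Q where Q: "Q \<subseteq> quot A B" "finite Q" "card Q = n"
    using infinite_arbitrarily_large[OF assms(1)] by blast
  let ?r = "inv_into A (\<lambda>x. coset x B)"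
  have r: "?r C \<in> A \<and> coset (?r C) B = C" if "C \<in> Q" for C
  proof -
    have "C \<in> (\<lambda>x. coset x B) ` A" using that Q(1) unfolding quot_def by blast
    from inv_into_into[OF this] f_inv_into_f[OF this] show ?thesis by blast
  qed
  have "inj_on ?r Q"
  proof (rule inj_onI)
    fix C D assume "C \<in> Q" "D \<in> Q" "?r C = ?r D"
    have "C = coset (?r C) B" using r[OF \<open>C \<in> Q\<close>] by simp
    also have "\<dots> = coset (?r D) B" using \<open>?r C = ?r D\<close> by simp
    also have "\<dots> = D" using r[OF \<open>D \<in> Q\<close>] by simp
    finally show "C = D" .
  qed
  then have "card (?r ` Q) = n" using Q(3) by (simp add: card_image)
  moreover have "?r C - ?r D \<notin> B" if "C \<in> Q" "D \<in> Q" "?r C \<noteq> ?r D" for C D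
  proof
    assume "?r C - ?r D \<in> B"
    then have "coset (?r C) B = coset (?r D) B" using coset_eq_iff[OF assms(2)] by blast
    then have "C = D" using r[OF that(1)] r[OF that(2)] by simp
    with that(3) show False by simp
  qed
  ultimately show ?thesis using that[of "?r ` Q"] r Q(2) by blast
qed

lemma sumset_subset_subgroup:
  "is_subgroup T \<Longrightarrow> A \<subseteq> T \<Longrightarrow> B \<subseteq> T \<Longrightarrow> sumset A B \<subseteq> T"
  unfolding sumset_def using subgroup_add by blast

lemma finite_sumset: "finite A \<Longrightarrow> finite B \<Longrightarrow> finite (sumset A B)"
proof -
  have "sumset A B = (\<lambda>(a, b). a + b) ` (A \<times> B)" unfolding sumset_def by auto
  then show "finite A \<Longrightarrow> finite B \<Longrightarrow> finite (sumset A B)" by simp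
qed

lemma sumset_subset_sumset_mod:
  assumes S: "is_subgroup S" and "A \<subseteq> sumset F S" "B \<subseteq> sumset G S"
  shows "sumset A B \<subseteq> sumset (sumset F G) S"
proof
  fix x assume "x \<in> sumset A B"
  then obtain f s g s' where "f \<in> F" "s \<in> S" "g \<in> G" "s' \<in> S" "x = (f + s) + (g + s')"
    using assms(2,3) unfolding sumset_def by blast
  moreover have "(f + s) + (g + s') = (f + g) + (s + s')" by (simp add: algebra_simps)
  ultimately show "x \<in> sumset (sumset F G) S"
    unfolding sumset_def using subgroup_add[OF S] by fastforce
qed

lemma commensurable_if_finite_quot:
  assumes S: "is_subgroup S" and N: "is_subgroup N" and T: "is_subgroup T" "S \<subseteq> T" "N \<subseteq> T"
    and fin: "finite (quot S N)" "finite (quot T S)"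
  shows "commensurable S N"
  unfolding commensurable_def
proof
  obtain F where "finite F" "T \<subseteq> sumset F S" using fin(2) unfolding finite_quot_iff[OF S] by blast
  moreover have "sumset S N \<subseteq> T" using sumset_subset_subgroup[OF T] .
  ultimately show "finite (quot (sumset S N) S)" unfolding finite_quot_iff[OF S] by blast
next
  obtain F where F: "finite F" "S \<subseteq> sumset F N" using fin(1) unfolding finite_quot_iff[OF N] by blast
  have "N \<subseteq> sumset {0} N" by (rule subset_sumset_right) simp
  from sumset_subset_sumset_mod[OF N F(2) this]
  have "sumset S N \<subseteq> sumset (sumset F {0}) N" .
  moreover have "finite (sumset F {0})" using F(1) by (simp add: finite_sumset)
  ultimately show "finite (quot (sumset S N) N)" unfolding finite_quot_iff[OF N] by blast
qed

section \<open>Neumann's lemma on coverings by cosets\<close>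

definition coset_union :: "('k::ab_group_add \<times> 'k set) set \<Rightarrow> 'k set" where
  "coset_union C = {c + h | c h H. (c, H) \<in> C \<and> h \<in> H}"

lemma infinite_quot_obtain_disjoint_coset:
  assumes "infinite (quot E H)" "is_subgroup H" "finite X"
  obtains b where "b \<in> E" "\<And>c. c \<in> X \<Longrightarrow> coset b H \<inter> coset c H = {}"
proof -
  have "\<not> quot E H \<subseteq> (\<lambda>c. coset c H) ` X" using assms(1,3) finite_subset by blast
  then obtain b where b: "b \<in> E" "coset b H \<notin> (\<lambda>c. coset c H) ` X" unfolding quot_def by blast
  have "coset b H \<inter> coset c H = {}" if "c \<in> X" for c
  proof (rule ccontr)
    assume "coset b H \<inter> coset c H \<noteq> {}"
    then obtain z where "z \<in> coset b H" "z \<in> coset c H" by blast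
    then have "coset b H = coset c H" using coset_eq_if_mem[OF assms(2)] by metis
    with b(2) that show False by blast
  qed
  with b(1) that show ?thesis by blast
qed

text \<open>If a coset \<open>b + H\<close> meets none of the cosets of \<open>H\<close> in the cover \<open>C\<close>, it is covered by
  the cosets \<open>c' + H'\<close> with \<open>H' \<noteq> H\<close>; translating by \<open>c - b\<close>, so is every \<open>c + H\<close> in \<open>C\<close>.\<close>
definition drop_subgroup :: "('k::ab_group_add \<times> 'k set) set \<Rightarrow> 'k set \<Rightarrow> 'k \<Rightarrow> ('k \<times> 'k set) set"
  where "drop_subgroup C H b = {p \<in> C. snd p \<noteq> H} \<union>
    {(c - b + c', H') | c c' H'. (c, H) \<in> C \<and> (c', H') \<in> C \<and> H' \<noteq> H}"

lemma coset_union_drop_subgroup: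
  assumes H: "is_subgroup H"
    and cover: "coset b H \<subseteq> coset_union C"
    and disj: "\<And>c. (c, H) \<in> C \<Longrightarrow> coset b H \<inter> coset c H = {}"
  shows "coset_union C \<subseteq> coset_union (drop_subgroup C H b)"
proof
  fix x assume "x \<in> coset_union C"
  then obtain c0 H0 h where c0: "(c0, H0) \<in> C" "h \<in> H0" "x = c0 + h"
    unfolding coset_union_def by blast
  show "x \<in> coset_union (drop_subgroup C H b)"
  proof (cases "H0 = H")
    case False
    with c0 show ?thesis unfolding coset_union_def drop_subgroup_def by force
  next
    case True
    with c0 have h: "h \<in> H" "x = c0 + h" by simp_all
    then have "b + h \<in> coset_union C" using cover by blast
    then obtain c' H' u where c': "(c', H') \<in> C" "u \<in> H'" "b + h = c' + u"
      unfolding coset_union_def by blast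
    have "H' \<noteq> H"
    proof
      assume "H' = H"
      with c' have "b + h \<in> coset c' H" by blast
      moreover have "b + h \<in> coset b H" using h by blast
      ultimately show False using disj c' \<open>H' = H\<close> by blast
    qed
    with c0 True c' have "(c0 - b + c', H') \<in> drop_subgroup C H b"
      unfolding drop_subgroup_def by blast
    moreover have "x = (c0 - b + c') + u" using h c' by (simp add: algebra_simps)
    ultimately show ?thesis using c'(2) unfolding coset_union_def by blast
  qed
qed

lemma snd_drop_subgroup: "snd ` drop_subgroup C H b \<subseteq> snd ` C - {H}"
  unfolding drop_subgroup_def by (auto intro: rev_image_eqI)

lemma finite_drop_subgroup:
  assumes "finite C"
  shows "finite (drop_subgroup C H b)"
proof -
  let ?f = "\<lambda>(p, q). (fst p - b + fst q, snd q)"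
  have "drop_subgroup C H b \<subseteq> C \<union> ?f ` (C \<times> C)"
  proof
    fix p assume "p \<in> drop_subgroup C H b"
    then consider "p \<in> C" | c c' H' where "(c, H) \<in> C" "(c', H') \<in> C" "p = (c - b + c', H')"
      unfolding drop_subgroup_def by blast
    then show "p \<in> C \<union> ?f ` (C \<times> C)"
    proof cases
      case (2 c c' H')
      then have "p = ?f ((c, H), (c', H'))" by simp
      with 2 show ?thesis by blast
    qed blast
  qed
  moreover have "finite (C \<union> ?f ` (C \<times> C))" using assms by simp
  ultimately show ?thesis by (rule finite_subset)
qed

lemma coset_cover_finite_index:
  assumes "is_subgroup E" "finite C" "\<And>c H. (c, H) \<in> C \<Longrightarrow> is_subgroup H \<and> H \<subseteq> E"
    "E \<subseteq> coset_union C"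
  shows "\<exists>(c, H)\<in>C. finite (quot E H)"
  using assms(2-)
proof (induction "card (snd ` C)" arbitrary: C rule: less_induct)
  case less
  from less.prems(3) subgroup_zero[OF assms(1)] obtain c0 H where cH: "(c0, H) \<in> C"
    unfolding coset_union_def by blast
  show ?case
  proof (cases "finite (quot E H)")
    case True
    with cH show ?thesis by blast
  next
    case False
    have H: "is_subgroup H" "H \<subseteq> E" using less.prems(2) cH by auto
    obtain b where b: "b \<in> E" "\<And>c. c \<in> fst ` C \<Longrightarrow> coset b H \<inter> coset c H = {}"
      using infinite_quot_obtain_disjoint_coset[OF False H(1)] less.prems(1) by blast
    have disj: "coset b H \<inter> coset c H = {}" if "(c, H) \<in> C" for c
      using b(2) that by (metis fst_conv image_eqI)
    have "coset b H \<subseteq> E" using H b(1) subgroup_add[OF assms(1)] by blast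
    with less.prems(3) have "coset b H \<subseteq> coset_union C" by blast
    let ?C' = "drop_subgroup C H b"
    have cover': "E \<subseteq> coset_union ?C'"
      using coset_union_drop_subgroup[OF H(1) \<open>coset b H \<subseteq> coset_union C\<close> disj] less.prems(3)
      by blast
    have subgroup_of_C: "H' \<in> snd ` C" if "(c', H') \<in> ?C'" for c' H'
    proof -
      from that have "H' \<in> snd ` ?C'" by force
      then show ?thesis using snd_drop_subgroup by (meson DiffD1 subsetD)
    qed
    have card_C': "card (snd ` ?C') < card (snd ` C)"
    proof (rule psubset_card_mono)
      have "H \<in> snd ` C" using cH by force
      with snd_drop_subgroup show "snd ` ?C' \<subset> snd ` C"
        by (metis Diff_iff Diff_subset psubsetI singletonI subset_trans subsetD)
    qed (use less.prems(1) in simp)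
    have "\<exists>(c', H')\<in>?C'. finite (quot E H')"
    proof (rule less.hyps[OF card_C' finite_drop_subgroup[OF less.prems(1)] _ cover'])
      fix c' H' assume "(c', H') \<in> ?C'"
      then obtain c where "(c, H') \<in> C" using subgroup_of_C by force
      then show "is_subgroup H' \<and> H' \<subseteq> E" using less.prems(2) by blast
    qed
    then obtain c' H' where H': "(c', H') \<in> ?C'" "finite (quot E H')" by blast
    obtain c where "(c, H') \<in> C" using subgroup_of_C[OF H'(1)] by force
    with H'(2) show ?thesis by blast
  qed
qed

lemma subgroup_cover_finite_index:
  assumes "is_subgroup E" "finite \<H>" "\<And>H. H \<in> \<H> \<Longrightarrow> is_subgroup H \<and> H \<subseteq> E" "E \<subseteq> \<Union>\<H>"
  shows "\<exists>H\<in>\<H>. finite (quot E H)"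
proof -
  have "E \<subseteq> coset_union ((\<lambda>H. (0, H)) ` \<H>)"
  proof
    fix x assume "x \<in> E"
    with assms(4) obtain H where "H \<in> \<H>" "x \<in> H" by blast
    then show "x \<in> coset_union ((\<lambda>H. (0, H)) ` \<H>)" unfolding coset_union_def by force
  qed
  then show ?thesis using coset_cover_finite_index[OF assms(1), of "(\<lambda>H. (0, H)) ` \<H>"] assms(2,3)
    by auto
qed

section \<open>Endomorphisms and orbits\<close>

definition endos :: "('k::ab_group_add \<Rightarrow> 'k) set" where
  "endos = {\<phi>. endo \<phi>}"

lemma endo_additive: "endo \<phi> \<Longrightarrow> additive \<phi>"
  unfolding endo_def additive_def by blast

lemmas endo_zero = additive.zero[OF endo_additive]
  and endo_minus = additive.minus[OF endo_additive]
  and endo_diff = additive.diff[OF endo_additive]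

lemma endo_add: "endo \<phi> \<Longrightarrow> \<phi> (x + y) = \<phi> x + \<phi> y"
  unfolding endo_def by blast

lemma endo_id: "endo id"
  and endo_comp: "endo \<phi> \<Longrightarrow> endo \<psi> \<Longrightarrow> endo (\<phi> \<circ> \<psi>)"
  and endo_zero_fun: "endo 0"
  and endo_plus: "endo \<phi> \<Longrightarrow> endo \<psi> \<Longrightarrow> endo (\<phi> + \<psi>)"
  and endo_uminus: "endo \<phi> \<Longrightarrow> endo (- \<phi>)"
  unfolding endo_def by (simp_all add: algebra_simps)

lemma subgroup_endos: "is_subgroup endos"
  unfolding is_subgroup_def endos_def using endo_zero_fun endo_plus endo_uminus by auto

definition colon :: "'k::ab_group_add set \<Rightarrow> 'k \<Rightarrow> ('k \<Rightarrow> 'k) set" where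
  "colon T y = {\<phi> \<in> endos. \<phi> y \<in> T}"

definition orbit :: "'k::ab_group_add \<Rightarrow> 'k set" where
  "orbit y = (\<lambda>\<phi>. \<phi> y) ` endos"

text \<open>\<open>\<phi> \<mapsto> \<phi> y\<close> induces a bijection from the cosets of \<open>colon S y\<close> in \<open>endos\<close> onto
  \<open>(orbit y + S)/S\<close>, so these are the \<open>y\<close> whose orbit is finite modulo \<open>S\<close>.\<close>
definition orbit_finite_mod :: "'k::ab_group_add set \<Rightarrow> 'k set" where
  "orbit_finite_mod S = {y. finite (quot endos (colon S y))}"

lemma subgroup_colon: "is_subgroup T \<Longrightarrow> is_subgroup (colon T y)"
  unfolding is_subgroup_def colon_def endos_def using endo_zero_fun endo_plus endo_uminus by auto

lemma colon_mono: "S \<subseteq> T \<Longrightarrow> colon S y \<subseteq> colon T y"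
  unfolding colon_def by blast

lemma subgroup_orbit: "is_subgroup (orbit y)"
  unfolding is_subgroup_def orbit_def endos_def
proof (intro conjI ballI)
  show "0 \<in> (\<lambda>\<phi>. \<phi> y) ` {\<phi>. endo \<phi>}"
    by (rule image_eqI[of _ _ 0]) (simp_all add: endo_zero_fun)
next
  fix a b assume "a \<in> (\<lambda>\<phi>. \<phi> y) ` {\<phi>. endo \<phi>}" "b \<in> (\<lambda>\<phi>. \<phi> y) ` {\<phi>. endo \<phi>}"
  then obtain \<phi> \<psi> where "endo \<phi>" "endo \<psi>" "a + b = (\<phi> + \<psi>) y" by auto
  then show "a + b \<in> (\<lambda>\<phi>. \<phi> y) ` {\<phi>. endo \<phi>}" using endo_plus by blast
next
  fix a assume "a \<in> (\<lambda>\<phi>. \<phi> y) ` {\<phi>. endo \<phi>}"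
  then obtain \<phi> where "endo \<phi>" "- a = (- \<phi>) y" by auto
  then show "- a \<in> (\<lambda>\<phi>. \<phi> y) ` {\<phi>. endo \<phi>}" using endo_uminus by blast
qed

lemma orbit_subset_iff_colon: "orbit y \<subseteq> T \<longleftrightarrow> colon T y = endos"
  unfolding orbit_def colon_def by blast

lemma subgroup_orbit_finite_mod:
  assumes S: "is_subgroup S"
  shows "is_subgroup (orbit_finite_mod S)"
  unfolding is_subgroup_def
proof (intro conjI ballI)
  have "colon S 0 = endos"
    unfolding colon_def endos_def using subgroup_zero[OF S] by (auto simp: endo_zero)
  then show "0 \<in> orbit_finite_mod S"
    unfolding orbit_finite_mod_def using finite_quot_self[OF subgroup_endos] by simp
next
  fix x assume "x \<in> orbit_finite_mod S"
  moreover have "colon S (- x) = colon S x"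
    unfolding colon_def endos_def using subgroup_uminus[OF S] by (force simp: endo_minus)
  ultimately show "- x \<in> orbit_finite_mod S" unfolding orbit_finite_mod_def by simp
next
  fix x y assume "x \<in> orbit_finite_mod S" "y \<in> orbit_finite_mod S"
  then have "finite (quot endos (colon S x \<inter> colon S y))"
    unfolding orbit_finite_mod_def using finite_quot_Int subgroup_colon[OF S] by blast
  moreover have "colon S x \<inter> colon S y \<subseteq> colon S (x + y)"
    unfolding colon_def endos_def using subgroup_add[OF S] by (auto simp: endo_add)
  ultimately show "x + y \<in> orbit_finite_mod S"
    unfolding orbit_finite_mod_def using finite_quot_mono subgroup_colon[OF S] subgroup_Int
    by blast
qed

lemma orbit_finite_modD:
  assumes "is_subgroup S" "y \<in> orbit_finite_mod S"
  obtains F where "finite F" "orbit y \<subseteq> sumset F S"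
proof -
  obtain \<Phi> where \<Phi>: "finite \<Phi>" "endos \<subseteq> sumset \<Phi> (colon S y)"
    using assms finite_quot_iff[OF subgroup_colon] unfolding orbit_finite_mod_def by blast
  have "orbit y \<subseteq> sumset ((\<lambda>\<psi>. \<psi> y) ` \<Phi>) S"
  proof
    fix z assume "z \<in> orbit y"
    then obtain \<phi> where "\<phi> \<in> endos" "z = \<phi> y" unfolding orbit_def by auto
    with \<Phi>(2) obtain \<psi> \<chi> where "\<psi> \<in> \<Phi>" "\<chi> \<in> colon S y" "z = \<psi> y + \<chi> y"
      unfolding sumset_def by auto
    then show "z \<in> sumset ((\<lambda>\<psi>. \<psi> y) ` \<Phi>) S" unfolding sumset_def colon_def by blast
  qed
  with \<Phi>(1) that show ?thesis by blast
qed

lemma finite_quot_Inter_colon: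
  assumes S: "is_subgroup S" and "finite Y" "Y \<subseteq> orbit_finite_mod S"
  shows "is_subgroup (endos \<inter> \<Inter>(colon S ` Y)) \<and> finite (quot endos (endos \<inter> \<Inter>(colon S ` Y)))"
  using assms(2,3)
proof (induction Y rule: finite_induct)
  case empty
  then show ?case using subgroup_endos finite_quot_self[OF subgroup_endos] by simp
next
  case (insert y Y)
  have "endos \<inter> \<Inter>(colon S ` insert y Y) = colon S y \<inter> (endos \<inter> \<Inter>(colon S ` Y))"
    unfolding colon_def by auto
  moreover have "finite (quot endos (colon S y))" "is_subgroup (colon S y)"
    using insert.prems subgroup_colon[OF S] unfolding orbit_finite_mod_def by auto
  ultimately show ?case using insert finite_quot_Int subgroup_Int by auto
qed

fun orbit_sum :: "'k::ab_group_add set \<Rightarrow> (nat \<Rightarrow> 'k) \<Rightarrow> nat \<Rightarrow> 'k set" where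
  "orbit_sum S y 0 = S"
| "orbit_sum S y (Suc i) = sumset (orbit (y i)) (orbit_sum S y i)"

lemma subgroup_orbit_sum: "is_subgroup S \<Longrightarrow> is_subgroup (orbit_sum S y i)"
  by (induction i) (simp_all add: subgroup_sumset subgroup_orbit)

lemma orbit_sum_mono: "j \<le> i \<Longrightarrow> orbit_sum S y j \<subseteq> orbit_sum S y i"
  by (rule lift_Suc_mono_le) (simp_all add: subset_sumset_right subgroup_zero subgroup_orbit)

lemma subset_orbit_sum: "S \<subseteq> orbit_sum S y i"
  using orbit_sum_mono[of 0 i S y] by simp

lemma orbit_subset_orbit_sum:
  assumes "is_subgroup S" "j < i"
  shows "orbit (y j) \<subseteq> orbit_sum S y i"
proof -
  have "orbit (y j) \<subseteq> orbit_sum S y (Suc j)"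
    using subset_sumset_left[OF subgroup_zero[OF subgroup_orbit_sum[OF assms(1)]]] by simp
  also have "\<dots> \<subseteq> orbit_sum S y i" using assms(2) by (intro orbit_sum_mono) simp
  finally show ?thesis .
qed

lemma orbit_sum_diff_notin:
  assumes S: "is_subgroup S" and "\<phi> \<in> endos" "\<phi> (y i) \<notin> orbit_sum S y i" "j < i"
  shows "\<phi> (y i) - \<phi> (y j) \<notin> S"
proof
  assume "\<phi> (y i) - \<phi> (y j) \<in> S"
  then have "\<phi> (y i) - \<phi> (y j) \<in> orbit_sum S y i" using subset_orbit_sum by blast
  moreover have "\<phi> (y j) \<in> orbit_sum S y i"
    using orbit_subset_orbit_sum[OF S assms(4)] assms(2) unfolding orbit_def by blast
  ultimately have "\<phi> (y i) - \<phi> (y j) + \<phi> (y j) \<in> orbit_sum S y i"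
    by (rule subgroup_add[OF subgroup_orbit_sum[OF S]])
  with assms(3) show False by simp
qed

lemma orbit_sum_cong: "(\<And>j. j < i \<Longrightarrow> y j = y' j) \<Longrightarrow> orbit_sum S y i = orbit_sum S y' i"
  by (induction i) simp_all

lemma orbit_sum_finite_mod:
  assumes S: "is_subgroup S" and "\<And>j. j < i \<Longrightarrow> y j \<in> orbit_finite_mod S"
  obtains F where "finite F" "orbit_sum S y i \<subseteq> sumset F S"
  using assms(2)
proof (induction i arbitrary: thesis)
  case 0
  have "S \<subseteq> sumset {0} S" by (rule subset_sumset_right) simp
  then show ?case using 0(1)[of "{0}"] by simp
next
  case (Suc i)
  obtain F where F: "finite F" "orbit_sum S y i \<subseteq> sumset F S" using Suc by auto
  obtain G where G: "finite G" "orbit (y i) \<subseteq> sumset G S"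
    using orbit_finite_modD[OF S] Suc.prems(2) by blast
  show ?case
    using Suc.prems(1)[OF finite_sumset[OF G(1) F(1)]] sumset_subset_sumset_mod[OF S G(2) F(2)]
    by simp
qed

inductive_set fully_invariant_hull :: "'k::ab_group_add set \<Rightarrow> 'k set" for L where
  image: "y \<in> L \<Longrightarrow> endo \<phi> \<Longrightarrow> \<phi> y \<in> fully_invariant_hull L"
| zero: "0 \<in> fully_invariant_hull L"
| add: "a \<in> fully_invariant_hull L \<Longrightarrow> b \<in> fully_invariant_hull L \<Longrightarrow> a + b \<in> fully_invariant_hull L"
| uminus: "a \<in> fully_invariant_hull L \<Longrightarrow> - a \<in> fully_invariant_hull L"

lemma fully_invariant_fully_invariant_hull: "fully_invariant (fully_invariant_hull L)"
proof -
  have "\<psi> a \<in> fully_invariant_hull L" if "endo \<psi>" "a \<in> fully_invariant_hull L" for \<psi> a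
    using that(2)
  proof induction
    case (image y \<phi>)
    then show ?case using fully_invariant_hull.image[of y L "\<psi> \<circ> \<phi>"] endo_comp[OF that(1)] by simp
  qed (simp_all add: endo_zero endo_add endo_minus that(1) fully_invariant_hull.intros)
  then show ?thesis unfolding fully_invariant_def is_subgroup_def
    by (blast intro: fully_invariant_hull.intros)
qed

lemma subset_fully_invariant_hull: "L \<subseteq> fully_invariant_hull L"
  using fully_invariant_hull.image[of _ L id] endo_id by auto

lemma fully_invariant_hull_subset:
  assumes "is_subgroup T" "\<And>y. y \<in> L \<Longrightarrow> orbit y \<subseteq> T"
  shows "fully_invariant_hull L \<subseteq> T"
proof
  fix a assume "a \<in> fully_invariant_hull L"
  then show "a \<in> T"
  proof induction
    case (image y \<phi>)
    then show ?case using assms(2) unfolding orbit_def endos_def by blast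
  qed (use assms(1) subgroup_zero subgroup_add subgroup_uminus in blast)+
qed

section \<open>An averaging argument\<close>

lemma card_quot_le_twice_outside:
  assumes R: "is_subgroup R" and W: "is_subgroup W" and V: "is_subgroup V" "W \<subseteq> V"
    and a: "a \<in> R" "a \<notin> V" and fin: "finite (quot R W)"
  shows "card (quot R W) \<le> 2 * card {C \<in> quot R W. \<not> C \<subseteq> V}"
proof -
  have coset_subset_iff: "coset x W \<subseteq> V \<longleftrightarrow> x \<in> V" for x
    using V subgroup_zero[OF W] subgroup_add[OF V(1)] by force
  let ?In = "{C \<in> quot R W. C \<subseteq> V}" and ?Out = "{C \<in> quot R W. \<not> C \<subseteq> V}"
  have "(\<lambda>C. coset a C) ` ?In \<subseteq> ?Out"
  proof
    fix D assume "D \<in> (\<lambda>C. coset a C) ` ?In"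
    then obtain x where x: "x \<in> R" "x \<in> V" "D = coset a (coset x W)"
      unfolding quot_def by (auto simp: coset_subset_iff)
    then have D: "D = coset (a + x) W" by (simp add: image_image add.assoc)
    have "a + x \<notin> V"
      using a(2) subgroup_diff[OF V(1), of "a + x" x] x(2) by auto
    then show "D \<in> ?Out"
      unfolding D quot_def using subgroup_add[OF R a(1) x(1)] coset_subset_iff by blast
  qed
  moreover have "inj_on (\<lambda>C. coset a C) ?In" by (rule inj_onI) (simp add: inj_image_eq_iff)
  ultimately have "card ?In \<le> card ?Out"
    using fin by (intro card_inj_on_le) auto
  moreover have "card (quot R W) = card ?In + card ?Out"
    using fin by (subst card_Un_disjoint[symmetric]) (auto intro: arg_cong[where f = card])
  ultimately show ?thesis by simp
qed

lemma exists_frequent_element: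
  fixes k :: nat
  assumes "finite Q" "Q \<noteq> {}" "finite I" "\<And>i. i \<in> I \<Longrightarrow> card Q \<le> k * card {q \<in> Q. P i q}"
  shows "\<exists>q\<in>Q. card I \<le> k * card {i \<in> I. P i q}"
proof (rule ccontr)
  assume "\<not> ?thesis"
  then have less: "k * card {i \<in> I. P i q} < card I" if "q \<in> Q" for q
    using that by auto
  have card_eq: "card {x \<in> A. R x} = (\<Sum>x\<in>A. if R x then 1 else 0)" if "finite A" for A and R :: "'c \<Rightarrow> bool"
    using that by (simp add: sum.inter_filter[symmetric])
  have "card I * card Q = (\<Sum>i\<in>I. card Q)" by simp
  also have "\<dots> \<le> (\<Sum>i\<in>I. k * card {q \<in> Q. P i q})" using assms(4) by (rule sum_mono)
  also have "\<dots> = k * (\<Sum>q\<in>Q. card {i \<in> I. P i q})"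
    using assms(1,3) by (simp add: card_eq sum_distrib_left sum.swap[of _ I])
  also have "\<dots> = (\<Sum>q\<in>Q. k * card {i \<in> I. P i q})" by (simp add: sum_distrib_left)
  also have "\<dots> < (\<Sum>q\<in>Q. card I)" using assms(1,2) less by (rule sum_strict_mono)
  also have "\<dots> = card I * card Q" by simp
  finally show False by simp
qed

lemma exists_outside_half:
  assumes R: "is_subgroup R" and W: "is_subgroup W" "finite (quot R W)" and "finite I"
    and V: "\<And>i. i \<in> I \<Longrightarrow> is_subgroup (V i) \<and> W \<subseteq> V i \<and> \<not> R \<subseteq> V i"
  shows "\<exists>x\<in>R. card I \<le> 2 * card {i \<in> I. x \<notin> V i}"
proof -
  have "quot R W \<noteq> {}" using subgroup_zero[OF R] unfolding quot_def by blast
  moreover have "card (quot R W) \<le> 2 * card {C \<in> quot R W. \<not> C \<subseteq> V i}" if "i \<in> I" for i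
    using V[OF that] card_quot_le_twice_outside[OF R W(1) _ _ _ _ W(2)] by blast
  ultimately obtain C where C: "C \<in> quot R W" "card I \<le> 2 * card {i \<in> I. \<not> C \<subseteq> V i}"
    using exists_frequent_element[OF W(2) _ assms(4), of 2 "\<lambda>i C. \<not> C \<subseteq> V i"] by blast
  then obtain x where x: "x \<in> R" "C = coset x W" unfolding quot_def by blast
  have "C \<subseteq> V i \<longleftrightarrow> x \<in> V i" if "i \<in> I" for i
    using V[OF that] x(2) subgroup_zero[OF W(1)] subgroup_add[of "V i"] by force
  then have "{i \<in> I. \<not> C \<subseteq> V i} = {i \<in> I. x \<notin> V i}" by blast
  with C(2) x(1) show ?thesis by auto
qed

section \<open>Uniformly fully inert subgroups\<close>

definition inert_bound :: "'k::ab_group_add set \<Rightarrow> nat \<Rightarrow> bool" where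
  "inert_bound S m \<longleftrightarrow> (\<forall>\<phi>. endo \<phi> \<longrightarrow>
     finite (quot (sumset (\<phi> ` S) S) S) \<and> card (quot (sumset (\<phi> ` S) S) S) \<le> m)"

lemma uniformly_fully_inertD:
  assumes "uniformly_fully_inert S"
  obtains m where "is_subgroup S" "inert_bound S m"
  using assms unfolding uniformly_fully_inert_def inert_bound_def by blast

lemma card_le_inert_bound:
  assumes m: "inert_bound S m" and S: "is_subgroup S" and "endo \<phi>" "finite I" "g ` I \<subseteq> S"
    and incongruent: "\<And>i j. i \<in> I \<Longrightarrow> j \<in> I \<Longrightarrow> i \<noteq> j \<Longrightarrow> \<phi> (g i) - \<phi> (g j) \<notin> S"
  shows "card I \<le> m"
proof -
  let ?Q = "quot (sumset (\<phi> ` S) S) S"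
  have "inj_on (\<lambda>i. coset (\<phi> (g i)) S) I"
    using incongruent by (intro inj_onI) (auto simp: coset_eq_iff[OF S])
  moreover have "(\<lambda>i. coset (\<phi> (g i)) S) ` I \<subseteq> ?Q"
  proof -
    have "\<phi> (g i) \<in> sumset (\<phi> ` S) S" if "i \<in> I" for i
      using that \<open>g ` I \<subseteq> S\<close> subset_sumset_left[OF subgroup_zero[OF S]] by blast
    then show ?thesis unfolding quot_def by blast
  qed
  ultimately have "card I \<le> card ?Q"
    using m \<open>endo \<phi>\<close> unfolding inert_bound_def by (metis card_inj_on_le)
  also have "\<dots> \<le> m" using m \<open>endo \<phi>\<close> unfolding inert_bound_def by blast
  finally show ?thesis .
qed

lemma finite_quot_Int_orbit_finite_mod:
  assumes m: "inert_bound S m" and S: "is_subgroup S"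
  shows "finite (quot S (S \<inter> orbit_finite_mod S))"
proof (rule ccontr)
  let ?L = "S \<inter> orbit_finite_mod S"
  assume "infinite (quot S ?L)"
  then obtain X where X: "X \<subseteq> S" "finite X" "card X = Suc m"
    and incongruent: "\<And>x y. x \<in> X \<Longrightarrow> y \<in> X \<Longrightarrow> x \<noteq> y \<Longrightarrow> x - y \<notin> ?L"
    using infinite_quot_obtain_incongruent subgroup_Int[OF S subgroup_orbit_finite_mod[OF S]]
    by metis
  define \<H> where "\<H> = {colon S (x - y) | x y. x \<in> X \<and> y \<in> X \<and> x \<noteq> y}"
  have "\<not> endos \<subseteq> \<Union>\<H>"
  proof
    assume cover: "endos \<subseteq> \<Union>\<H>"
    have "\<H> \<subseteq> (\<lambda>(x, y). colon S (x - y)) ` (X \<times> X)" unfolding \<H>_def by auto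
    with X(2) have "finite \<H>" by (meson finite_SigmaI finite_imageI finite_subset)
    moreover have "is_subgroup H \<and> H \<subseteq> endos" if "H \<in> \<H>" for H
      using that subgroup_colon[OF S] unfolding \<H>_def colon_def by auto
    ultimately obtain H where H: "H \<in> \<H>" "finite (quot endos H)"
      using subgroup_cover_finite_index[OF subgroup_endos _ _ cover] by blast
    then obtain x y where "x \<in> X" "y \<in> X" "x \<noteq> y" "H = colon S (x - y)"
      unfolding \<H>_def by blast
    moreover from this(1,2) have "x - y \<in> S" using X(1) subgroup_diff[OF S] by blast
    ultimately show False using H(2) incongruent unfolding orbit_finite_mod_def by blast
  qed
  then obtain \<phi> where \<phi>: "endo \<phi>" "\<And>H. H \<in> \<H> \<Longrightarrow> \<phi> \<notin> H" unfolding endos_def by blast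
  have "\<phi> x - \<phi> y \<notin> S" if "x \<in> X" "y \<in> X" "x \<noteq> y" for x y
  proof -
    have "\<phi> \<notin> colon S (x - y)" using \<phi>(2) that unfolding \<H>_def by blast
    with \<phi>(1) show ?thesis unfolding colon_def endos_def by (simp add: endo_diff)
  qed
  then have "card X \<le> m" using card_le_inert_bound[OF m S \<phi>(1) X(2), of id] X(1) by auto
  with X(3) show False by simp
qed

definition orbit_chain :: "'k::ab_group_add set \<Rightarrow> 'k set \<Rightarrow> (nat \<Rightarrow> 'k) \<Rightarrow> nat \<Rightarrow> bool" where
  "orbit_chain S L y t \<longleftrightarrow> (\<forall>i<t. y i \<in> L \<and> \<not> orbit (y i) \<subseteq> orbit_sum S y i)"

lemma exists_saturated_orbit_chain:
  assumes "\<And>y t. orbit_chain S L y t \<Longrightarrow> t \<le> b"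
  shows "\<exists>y t. orbit_chain S L y t \<and> (\<forall>z\<in>L. orbit z \<subseteq> orbit_sum S y t)"
proof -
  have "orbit_chain S L y 0" for y unfolding orbit_chain_def by simp
  then obtain t where "\<exists>y. orbit_chain S L y t" and t_max: "\<And>t'. \<exists>y. orbit_chain S L y t' \<Longrightarrow> t' \<le> t"
    using Nat.ex_has_greatest_nat[of "\<lambda>t. \<exists>y. orbit_chain S L y t" 0 b] assms by blast
  then obtain y where y: "orbit_chain S L y t" by blast
  have "orbit z \<subseteq> orbit_sum S y t" if "z \<in> L" for z
  proof (rule ccontr)
    assume z: "\<not> orbit z \<subseteq> orbit_sum S y t"
    have "orbit_sum S (y(t := z)) i = orbit_sum S y i" if "i \<le> t" for i
      using that by (intro orbit_sum_cong) simp
    then have "orbit_chain S L (y(t := z)) (Suc t)"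
      using y z \<open>z \<in> L\<close> unfolding orbit_chain_def by (auto simp: less_Suc_eq)
    with t_max show False by fastforce
  qed
  with y show ?thesis by blast
qed

text \<open>Averaging over the cosets of \<open>W\<close> gives an endomorphism \<open>\<phi>\<close> outside at least half of the
  \<open>V i\<close>; on those indices \<open>\<phi> \<circ> y\<close> is injective modulo \<open>S\<close>.\<close>
lemma orbit_chain_length_le:
  assumes m: "inert_bound S m" and S: "is_subgroup S"
    and chain: "orbit_chain S (S \<inter> orbit_finite_mod S) y t"
  shows "t \<le> 2 * m"
proof -
  define W where "W = endos \<inter> \<Inter>(colon S ` y ` {..<t})"
  define V where "V i = colon (orbit_sum S y i) (y i)" for i
  have y: "y i \<in> S" "y i \<in> orbit_finite_mod S" "\<not> orbit (y i) \<subseteq> orbit_sum S y i" if "i < t" for i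
    using chain that unfolding orbit_chain_def by auto
  have W: "is_subgroup W" "finite (quot endos W)"
    using finite_quot_Inter_colon[OF S, of "y ` {..<t}"] y(2) unfolding W_def by auto
  have "is_subgroup (V i) \<and> W \<subseteq> V i \<and> \<not> endos \<subseteq> V i" if "i < t" for i
  proof (intro conjI)
    show "is_subgroup (V i)" unfolding V_def by (rule subgroup_colon[OF subgroup_orbit_sum[OF S]])
    have "W \<subseteq> colon S (y i)" using that unfolding W_def by blast
    then show "W \<subseteq> V i" unfolding V_def using colon_mono[OF subset_orbit_sum] by blast
    show "\<not> endos \<subseteq> V i"
      using y(3)[OF that] orbit_subset_iff_colon unfolding V_def colon_def by blast
  qed
  then obtain \<phi> where \<phi>: "\<phi> \<in> endos" and t_le: "t \<le> 2 * card {i \<in> {..<t}. \<phi> \<notin> V i}"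
    using exists_outside_half[OF subgroup_endos W, of "{..<t}" V] by auto
  let ?Good = "{i \<in> {..<t}. \<phi> \<notin> V i}"
  have incongruent_later: "\<phi> (y i) - \<phi> (y j) \<notin> S" if "i \<in> ?Good" "j < i" for i j
    using orbit_sum_diff_notin[where y = y, OF S \<phi> _ that(2)] that(1) \<phi> unfolding V_def colon_def by blast
  have "card ?Good \<le> m"
  proof (rule card_le_inert_bound[OF m S _ _ _, of \<phi> ?Good y])
    show "endo \<phi>" using \<phi> unfolding endos_def by simp
    show "y ` ?Good \<subseteq> S" using y(1) by blast
    fix i j assume "i \<in> ?Good" "j \<in> ?Good" "i \<noteq> j"
    then consider "j < i" | "i < j" by linarith
    then show "\<phi> (y i) - \<phi> (y j) \<notin> S"
    proof cases
      case 2
      then have "\<phi> (y j) - \<phi> (y i) \<notin> S" using incongruent_later \<open>j \<in> ?Good\<close> by blast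
      then show ?thesis using subgroup_uminus[OF S] by (metis minus_diff_eq)
    qed (use incongruent_later \<open>i \<in> ?Good\<close> in blast)
  qed simp
  with t_le show ?thesis by simp
qed

theorem uniformly_fully_inert_commensurable_fully_invariant:
  fixes S :: "'k::ab_group_add set"
  assumes "uniformly_fully_inert S"
  shows "\<exists>F. fully_invariant F \<and> commensurable S F"
proof -
  obtain m where S: "is_subgroup S" and m: "inert_bound S m"
    using assms by (rule uniformly_fully_inertD)
  define L where "L = S \<inter> orbit_finite_mod S"
  have "\<exists>y t. orbit_chain S L y t \<and> (\<forall>z\<in>L. orbit z \<subseteq> orbit_sum S y t)"
    using orbit_chain_length_le[OF m S] unfolding L_def by (rule exists_saturated_orbit_chain)
  then obtain y t where chain: "orbit_chain S L y t"
    and saturated: "\<And>z. z \<in> L \<Longrightarrow> orbit z \<subseteq> orbit_sum S y t" by blast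
  define N where "N = fully_invariant_hull L"
  have N: "fully_invariant N" unfolding N_def by (rule fully_invariant_fully_invariant_hull)
  then have N_subgroup: "is_subgroup N" unfolding fully_invariant_def by blast
  have N_T: "N \<subseteq> orbit_sum S y t"
    unfolding N_def using subgroup_orbit_sum[OF S] saturated by (rule fully_invariant_hull_subset)
  have fin_S: "finite (quot S N)"
    using finite_quot_Int_orbit_finite_mod[OF m S] subgroup_Int[OF S subgroup_orbit_finite_mod[OF S]]
      N_subgroup subset_fully_invariant_hull unfolding N_def L_def by (rule finite_quot_mono)
  have "y i \<in> orbit_finite_mod S" if "i < t" for i
    using chain that unfolding orbit_chain_def L_def by blast
  then obtain F where "finite F" "orbit_sum S y t \<subseteq> sumset F S"
    by (rule orbit_sum_finite_mod[OF S])
  then have fin_T: "finite (quot (orbit_sum S y t) S)" using finite_quot_iff[OF S] by blast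
  have "commensurable S N"
    by (rule commensurable_if_finite_quot[OF S N_subgroup subgroup_orbit_sum[OF S] subset_orbit_sum
          N_T fin_S fin_T])
  with N show ?thesis by blast
qed

theorem proposition2p2:
  fixes S :: "('a::ab_group_add \<times> 'a) set"
  assumes "uniformly_fully_inert S"
  shows "\<exists>F :: ('a \<times> 'a) set. fully_invariant F \<and> commensurable S F"
  using uniformly_fully_inert_commensurable_fully_invariant[OF assms] .

end
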